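(* For every $k\ge1$ and every $g\in G_k$, we have $g^2\in G_k'$.
   Context: Let $C_2=\{e,\sigma\}$ with $\sigma=(1,2)$. Define $B_1=C_2$ and $B_k=B_{k-1}\wr C_2$ for $k>1$, with elements written as wreath recursions $(g_1,g_2)\pi$, $g_1,g_2\in B_{k-1}$, $\pi\in C_2$, and multiplication $(g_1,g_2)\pi\cdot(h_1,h_2)\rho=(g_1h_{\pi(1)},g_2h_{\pi(2)})\pi\rho$. Define $G_1=\{e\}$ and, for $k>1$, $G_k=\{(g_1,g_2)\pi\in B_k : g_1g_2\in G_{k-1}\}$. *)

theory Defs
  imports "HOL-Algebra.Solvable_Groups"
begin

text \<open>Elements of the iterated wreath products B_k.  Base b encodes an element of
  B_1 = C_2 (b = True means sigma); Node g1 g2 p encodes the wreath recursion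
  (g1,g2)pi with pi = sigma iff p.\<close>
datatype wr = Base bool | Node wr wr bool

fun wmult :: "wr \<Rightarrow> wr \<Rightarrow> wr" where
  "wmult (Base a) (Base b) = Base (a \<noteq> b)"
| "wmult (Node g1 g2 p) (Node h1 h2 q) =
     Node (wmult g1 (if p then h2 else h1)) (wmult g2 (if p then h1 else h2)) (p \<noteq> q)"
| "wmult _ _ = Base False"

fun wone :: "nat \<Rightarrow> wr" where
  "wone 0 = Base False"
| "wone (Suc 0) = Base False"
| "wone (Suc (Suc k)) = Node (wone (Suc k)) (wone (Suc k)) False"

fun B :: "nat \<Rightarrow> wr set" where
  "B 0 = {}"
| "B (Suc 0) = {Base b | b. True}"
| "B (Suc (Suc k)) = {Node g1 g2 p | g1 g2 p. g1 \<in> B (Suc k) \<and> g2 \<in> B (Suc k)}"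

fun G :: "nat \<Rightarrow> wr set" where
  "G 0 = {}"
| "G (Suc 0) = {wone (Suc 0)}"
| "G (Suc (Suc k)) = {Node g1 g2 p | g1 g2 p. g1 \<in> B (Suc k) \<and> g2 \<in> B (Suc k)
                                         \<and> wmult g1 g2 \<in> G (Suc k)}"

definition Ggrp :: "nat \<Rightarrow> wr monoid" where
  "Ggrp k = \<lparr>carrier = G k, mult = wmult, one = wone k\<rparr>"

end

theory Submission
  imports Defs
begin

text \<open>G_k is the kernel of the parity homomorphism B_k \<rightarrow> C_2 defined by
  par (g1,g2)\<pi> = par g1 + par g2.  Every g = (g1,g2)\<pi> in G_k factors as
  (g1 g2, 1) (g2\<inverse>, g2) (1,1)\<pi> with all three factors in G_k.  The square of the first
  lies in the image of G_(k-1)' under x \<mapsto> (x,1), by induction; the square of the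
  second, (g2^-2, g2^2), is the commutator of (1,1)\<sigma> and (g2, g2\<inverse>); the third
  squares to 1.  Since G_k/G_k' is abelian, the square of a product is the product of the
  squares modulo G_k'.\<close>

lemma (in group) commutator_in_derived:
  assumes "x \<in> carrier G" "y \<in> carrier G"
  shows "x \<otimes> y \<otimes> inv x \<otimes> inv y \<in> derived G (carrier G)"
  unfolding derived_def by (rule generate.incl) (use assms in blast)

lemma (in group) square_mult_in_derived:
  assumes x: "x \<in> carrier G" and y: "y \<in> carrier G"
    and xx: "x \<otimes> x \<in> derived G (carrier G)" and yy: "y \<otimes> y \<in> derived G (carrier G)"
  shows "(x \<otimes> y) \<otimes> (x \<otimes> y) \<in> derived G (carrier G)"
proof -
  interpret D: subgroup "derived G (carrier G)" G
    by (rule derived_is_subgroup) simp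
  have cancel: "a \<otimes> (inv a \<otimes> w) = w" "inv a \<otimes> (a \<otimes> w) = w"
    if "a \<in> carrier G" "w \<in> carrier G" for a w
    using that by (simp_all add: m_assoc[symmetric])
  have "(x \<otimes> y) \<otimes> (x \<otimes> y) = (x \<otimes> x) \<otimes> (inv x \<otimes> y \<otimes> inv (inv x) \<otimes> inv y) \<otimes> (y \<otimes> y)"
    using x y by (simp add: m_assoc cancel)
  then show ?thesis
    using xx yy commutator_in_derived[of "inv x" y] x y by simp
qed

fun winv :: "wr \<Rightarrow> wr" where
  "winv (Base b) = Base b"
| "winv (Node g1 g2 p) = Node (if p then winv g2 else winv g1) (if p then winv g1 else winv g2) p"

fun wpar :: "wr \<Rightarrow> bool" where
  "wpar (Base b) = b"
| "wpar (Node g1 g2 p) = (wpar g1 \<noteq> wpar g2)"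

lemma wmult_in_B: "x \<in> B (Suc n) \<Longrightarrow> y \<in> B (Suc n) \<Longrightarrow> wmult x y \<in> B (Suc n)"
  by (induction n arbitrary: x y) auto

lemma wone_in_B: "wone (Suc n) \<in> B (Suc n)"
  by (induction n) auto

lemma winv_in_B: "x \<in> B (Suc n) \<Longrightarrow> winv x \<in> B (Suc n)"
  by (induction n arbitrary: x) auto

lemma wmult_assoc:
  "x \<in> B (Suc n) \<Longrightarrow> y \<in> B (Suc n) \<Longrightarrow> z \<in> B (Suc n) \<Longrightarrow>
   wmult (wmult x y) z = wmult x (wmult y z)"
  by (induction n arbitrary: x y z) auto

lemma wmult_wone_left: "x \<in> B (Suc n) \<Longrightarrow> wmult (wone (Suc n)) x = x"
  by (induction n arbitrary: x) auto

lemma wmult_wone_right: "x \<in> B (Suc n) \<Longrightarrow> wmult x (wone (Suc n)) = x"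
  by (induction n arbitrary: x) auto

lemma wmult_winv_left: "x \<in> B (Suc n) \<Longrightarrow> wmult (winv x) x = wone (Suc n)"
  by (induction n arbitrary: x) auto

lemma wmult_winv_right: "x \<in> B (Suc n) \<Longrightarrow> wmult x (winv x) = wone (Suc n)"
  by (induction n arbitrary: x) auto

lemma winv_winv: "x \<in> B (Suc n) \<Longrightarrow> winv (winv x) = x"
  by (induction n arbitrary: x) auto

lemma winv_wone: "winv (wone (Suc n)) = wone (Suc n)"
  by (induction n) auto

lemma wpar_wmult:
  "x \<in> B (Suc n) \<Longrightarrow> y \<in> B (Suc n) \<Longrightarrow> wpar (wmult x y) = (wpar x \<noteq> wpar y)"
  by (induction n arbitrary: x y) (auto split: if_splits)

lemma wpar_wone: "\<not> wpar (wone (Suc n))"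
  by (induction n) auto

lemma wpar_winv: "x \<in> B (Suc n) \<Longrightarrow> wpar (winv x) = wpar x"
proof (induction n arbitrary: x)
  case (Suc n)
  then obtain g1 g2 p where "x = Node g1 g2 p" "g1 \<in> B (Suc n)" "g2 \<in> B (Suc n)"
    by auto
  with Suc.IH show ?case by (cases p) auto
qed auto

lemma G_eq_kernel_wpar: "G (Suc n) = {x \<in> B (Suc n). \<not> wpar x}"
proof (induction n)
  case (Suc n)
  have "x \<in> G (Suc (Suc n)) \<longleftrightarrow> x \<in> B (Suc (Suc n)) \<and> \<not> wpar x" for x
    by (cases x) (auto simp: Suc.IH wpar_wmult wmult_in_B)
  then show ?case by blast
qed auto

lemma carrier_Ggrp: "carrier (Ggrp k) = G k"
  and mult_Ggrp: "x \<otimes>\<^bsub>Ggrp k\<^esub> y = wmult x y"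
  and one_Ggrp: "\<one>\<^bsub>Ggrp k\<^esub> = wone k"
  by (simp_all add: Ggrp_def)

lemma group_Ggrp: "group (Ggrp (Suc n))"
proof (rule groupI[where ?G = "Ggrp (Suc n)", unfolded carrier_Ggrp mult_Ggrp one_Ggrp])
  fix x
  assume "x \<in> G (Suc n)"
  then show "\<exists>y\<in>G (Suc n). wmult y x = wone (Suc n)"
    by (intro bexI[of _ "winv x"]) (auto simp: G_eq_kernel_wpar wmult_winv_left winv_in_B wpar_winv)
qed (auto simp: G_eq_kernel_wpar wmult_in_B wpar_wmult wone_in_B wpar_wone wmult_assoc
       wmult_wone_left)

lemma inv_Ggrp: "x \<in> G (Suc n) \<Longrightarrow> inv\<^bsub>Ggrp (Suc n)\<^esub> x = winv x"
  by (rule group.inv_equality[OF group_Ggrp])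
     (auto simp: carrier_Ggrp mult_Ggrp one_Ggrp G_eq_kernel_wpar wmult_winv_left winv_in_B
       wpar_winv)

lemma group_hom_Node_wone:
  "group_hom (Ggrp (Suc n)) (Ggrp (Suc (Suc n))) (\<lambda>x. Node x (wone (Suc n)) False)"
proof -
  have "(\<lambda>x. Node x (wone (Suc n)) False) \<in> hom (Ggrp (Suc n)) (Ggrp (Suc (Suc n)))"
    by (rule homI)
       (auto simp: carrier_Ggrp mult_Ggrp G_eq_kernel_wpar wpar_wone wone_in_B wmult_wone_left
         wmult_in_B)
  then show ?thesis
    by (intro group_hom.intro group_hom_axioms.intro group_Ggrp)
qed

lemma Node_in_G:
  "Node g1 g2 p \<in> G (Suc (Suc n)) \<longleftrightarrow> g1 \<in> B (Suc n) \<and> g2 \<in> B (Suc n) \<and> wmult g1 g2 \<in> G (Suc n)"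
  by simp

declare G.simps [simp del]

lemma Node_wone_in_G: "h \<in> G (Suc n) \<Longrightarrow> Node h (wone (Suc n)) False \<in> G (Suc (Suc n))"
  by (simp add: Node_in_G G_eq_kernel_wpar[of n] wone_in_B wmult_wone_right)

lemma Node_winv_in_G: "x \<in> B (Suc n) \<Longrightarrow> Node (winv x) x p \<in> G (Suc (Suc n))"
  by (simp add: Node_in_G G_eq_kernel_wpar[of n] winv_in_B wmult_winv_left wone_in_B
      wpar_wone)

lemma Node_wone_wone_in_G: "Node (wone (Suc n)) (wone (Suc n)) p \<in> G (Suc (Suc n))"
  by (simp add: Node_in_G G_eq_kernel_wpar[of n] wone_in_B wmult_wone_left wpar_wone)

lemma Node_factorization:
  assumes "g1 \<in> B (Suc n)" "g2 \<in> B (Suc n)"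
  shows "Node g1 g2 p =
    wmult (wmult (Node (wmult g1 g2) (wone (Suc n)) False) (Node (winv g2) g2 False))
      (Node (wone (Suc n)) (wone (Suc n)) p)"
  using assms
  by (simp add: wmult_assoc winv_in_B wmult_winv_right wmult_wone_left wmult_wone_right
      wmult_in_B wone_in_B)

lemma square_Node_wone_in_derived:
  assumes h: "h \<in> G (Suc n)"
    and hh: "h \<otimes>\<^bsub>Ggrp (Suc n)\<^esub> h \<in> derived (Ggrp (Suc n)) (carrier (Ggrp (Suc n)))"
  shows "Node h (wone (Suc n)) False \<otimes>\<^bsub>Ggrp (Suc (Suc n))\<^esub> Node h (wone (Suc n)) False
    \<in> derived (Ggrp (Suc (Suc n))) (carrier (Ggrp (Suc (Suc n))))"
proof -
  let ?\<phi> = "\<lambda>x. Node x (wone (Suc n)) False"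
  interpret \<phi>: group_hom "Ggrp (Suc n)" "Ggrp (Suc (Suc n))" ?\<phi>
    by (rule group_hom_Node_wone)
  have "?\<phi> h \<otimes>\<^bsub>Ggrp (Suc (Suc n))\<^esub> ?\<phi> h = ?\<phi> (h \<otimes>\<^bsub>Ggrp (Suc n)\<^esub> h)"
    using h by (simp add: carrier_Ggrp)
  also have "\<dots> \<in> ?\<phi> ` derived (Ggrp (Suc n)) (carrier (Ggrp (Suc n)))"
    using hh by blast
  also have "\<dots> = derived (Ggrp (Suc (Suc n))) (?\<phi> ` carrier (Ggrp (Suc n)))"
    by (rule \<phi>.derived_img[symmetric]) simp
  also have "\<dots> \<subseteq> derived (Ggrp (Suc (Suc n))) (carrier (Ggrp (Suc (Suc n))))"
    by (rule \<phi>.H.mono_derived) auto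
  finally show ?thesis .
qed

text \<open>The square (x\<inverse>,x)^2 = (x^-2,x^2) is the commutator of (1,1)\<sigma> and (x,x\<inverse>).\<close>

lemma square_Node_winv_in_derived:
  assumes x: "x \<in> B (Suc n)"
  shows "Node (winv x) x False \<otimes>\<^bsub>Ggrp (Suc (Suc n))\<^esub> Node (winv x) x False
    \<in> derived (Ggrp (Suc (Suc n))) (carrier (Ggrp (Suc (Suc n))))"
proof -
  interpret K: group "Ggrp (Suc (Suc n))" by (rule group_Ggrp)
  define s where "s = Node (wone (Suc n)) (wone (Suc n)) True"
  define c where "c = Node (winv (winv x)) (winv x) False"
  have s: "s \<in> carrier (Ggrp (Suc (Suc n)))"
    by (simp add: s_def carrier_Ggrp Node_wone_wone_in_G)
  have c: "c \<in> carrier (Ggrp (Suc (Suc n)))"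
    by (simp add: c_def carrier_Ggrp Node_winv_in_G winv_in_B x)
  have "s \<otimes>\<^bsub>Ggrp (Suc (Suc n))\<^esub> c \<otimes>\<^bsub>Ggrp (Suc (Suc n))\<^esub> inv\<^bsub>Ggrp (Suc (Suc n))\<^esub> s
      \<otimes>\<^bsub>Ggrp (Suc (Suc n))\<^esub> inv\<^bsub>Ggrp (Suc (Suc n))\<^esub> c
    = Node (winv x) x False \<otimes>\<^bsub>Ggrp (Suc (Suc n))\<^esub> Node (winv x) x False"
    using s c x
    by (simp add: carrier_Ggrp inv_Ggrp mult_Ggrp s_def c_def winv_wone winv_winv winv_in_B
        wmult_wone_left wmult_wone_right)
  then show ?thesis
    using K.commutator_in_derived[OF s c] by simp
qed

lemma square_Node_wone_wone:
  "Node (wone (Suc n)) (wone (Suc n)) p \<otimes>\<^bsub>Ggrp (Suc (Suc n))\<^esub>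
     Node (wone (Suc n)) (wone (Suc n)) p = \<one>\<^bsub>Ggrp (Suc (Suc n))\<^esub>"
  by (simp add: mult_Ggrp one_Ggrp wmult_wone_left wone_in_B)

lemma square_in_derived_Ggrp:
  "g \<in> G (Suc n) \<Longrightarrow> g \<otimes>\<^bsub>Ggrp (Suc n)\<^esub> g \<in> derived (Ggrp (Suc n)) (carrier (Ggrp (Suc n)))"
proof (induction n arbitrary: g)
  case 0
  interpret group "Ggrp (Suc 0)" by (rule group_Ggrp)
  interpret D: subgroup "derived (Ggrp (Suc 0)) (carrier (Ggrp (Suc 0)))" "Ggrp (Suc 0)"
    by (rule derived_is_subgroup) simp
  from 0 have "g = \<one>\<^bsub>Ggrp (Suc 0)\<^esub>" by (simp add: one_Ggrp G.simps)
  then show ?case by simp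
next
  case (Suc n)
  let ?K = "Ggrp (Suc (Suc n))" and ?e = "wone (Suc n)"
  interpret K: group ?K by (rule group_Ggrp)
  interpret D: subgroup "derived ?K (carrier ?K)" ?K
    by (rule K.derived_is_subgroup) simp
  from Suc.prems obtain g1 g2 p where g: "g = Node g1 g2 p"
    and g1: "g1 \<in> B (Suc n)" and g2: "g2 \<in> B (Suc n)" and h: "wmult g1 g2 \<in> G (Suc n)"
    by (auto simp: G.simps)
  define a where "a = Node (wmult g1 g2) ?e False"
  define d where "d = Node (winv g2) g2 False"
  define s where "s = Node ?e ?e p"
  have carrier: "a \<in> carrier ?K" "d \<in> carrier ?K" "s \<in> carrier ?K"
    using h g2 by (simp_all add: a_def d_def s_def carrier_Ggrp Node_wone_in_G Node_winv_in_G
        Node_wone_wone_in_G)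
  have "g = a \<otimes>\<^bsub>?K\<^esub> d \<otimes>\<^bsub>?K\<^esub> s"
    using g1 g2 by (simp add: g a_def d_def s_def mult_Ggrp Node_factorization)
  moreover have "a \<otimes>\<^bsub>?K\<^esub> a \<in> derived ?K (carrier ?K)"
    unfolding a_def using h Suc.IH[OF h] by (rule square_Node_wone_in_derived)
  moreover have "d \<otimes>\<^bsub>?K\<^esub> d \<in> derived ?K (carrier ?K)"
    unfolding d_def using g2 by (rule square_Node_winv_in_derived)
  moreover have "s \<otimes>\<^bsub>?K\<^esub> s \<in> derived ?K (carrier ?K)"
    unfolding s_def square_Node_wone_wone by simp
  ultimately show ?case
    using carrier by (simp add: K.square_mult_in_derived)
qed

theorem mainTheorem17:
  fixes k :: nat and g :: wr
  assumes "k \<ge> 1" and "g \<in> G k"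
  shows "g \<otimes>\<^bsub>Ggrp k\<^esub> g \<in> derived (Ggrp k) (carrier (Ggrp k))"
proof -
  obtain n where "k = Suc n" using assms(1) by (cases k) auto
  then show ?thesis using square_in_derived_Ggrp assms(2) by simp
qed

end
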